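(* For every $n\geq 5$, the alternating group $A_n$ is $D$-realisable but not completely $D$-realisable.
   Context: All groups are finite. $D(H)=H'$ denotes the derived subgroup of $H$. A finite group $G$ is $D$-realisable if there is a finite group $H$ with $G\cong D(H)$. It is completely $D$-realisable if there is a finite group $H$ such that: (i) $G\cong D(H)$; (ii) for every subgroup $G_1\leq G$ there exists $H_1\leq H$ with $G_1\cong D(H_1)$; (iii) for every $H_1\leq H$ there exists $G_1\leq G$ with $D(H_1)\cong G_1$. *)

theory Defs
  imports "HOL-Algebra.Algebra"
begin

definition derived_group :: "('a, 'b) monoid_scheme \<Rightarrow> ('a, 'b) monoid_scheme" where
  "derived_group H = H\<lparr>carrier := derived H (carrier H)\<rparr>"

text \<open>Finite groups H are quantified over with carrier type nat; every finite
  group is isomorphic to such a group, and all notions are isomorphism-invariant.\<close>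
definition D_realisable :: "('a, 'b) monoid_scheme \<Rightarrow> bool" where
  "D_realisable G \<longleftrightarrow>
     (\<exists>H :: nat monoid. group H \<and> finite (carrier H) \<and> derived_group H \<cong> G)"

definition completely_D_realisable :: "('a, 'b) monoid_scheme \<Rightarrow> bool" where
  "completely_D_realisable G \<longleftrightarrow>
     (\<exists>H :: nat monoid. group H \<and> finite (carrier H) \<and> derived_group H \<cong> G \<and>
        (\<forall>G1. subgroup G1 G \<longrightarrow>
           (\<exists>H1. subgroup H1 H \<and> derived_group (H\<lparr>carrier := H1\<rparr>) \<cong> G\<lparr>carrier := G1\<rparr>)) \<and>
        (\<forall>H1. subgroup H1 H \<longrightarrow>
           (\<exists>G1. subgroup G1 G \<and> derived_group (H\<lparr>carrier := H1\<rparr>) \<cong> G\<lparr>carrier := G1\<rparr>)))"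

end

theory Submission
  imports Defs
begin

text \<open>For n \<ge> 5 the group A_n is perfect, so it is the derived subgroup of itself. On the other
  hand A_n contains a copy of S_3, and S_3 is never a derived subgroup: if H' is isomorphic to S_3,
  its elements of order 3 are m and m\<inverse>, so conjugation by any h \<in> H either fixes or inverts m.
  Which of the two happens is multiplicative in h, hence every commutator, and so all of H',
  centralises m; but m is not central in S_3.\<close>

lemma derived_group_carrier [simp]: "carrier (derived_group G) = derived G (carrier G)"
  and derived_group_mult [simp]: "monoid.mult (derived_group G) = monoid.mult G"
  and derived_group_one [simp]: "monoid.one (derived_group G) = monoid.one G"
  by (simp_all add: derived_group_def)

lemma (in group) derived_group_is_group: "group (derived_group G)"
  using subgroup_imp_group[OF derived_is_subgroup[of "carrier G"]] by (simp add: derived_group_def)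

lemma iso_derived_group:
  assumes "group G" "group H" "\<phi> \<in> iso G H"
  shows "\<phi> \<in> iso (derived_group G) (derived_group H)"
proof -
  interpret group_hom G H \<phi>
    using assms by (simp add: group_hom_def group_hom_axioms_def iso_def)
  have "\<phi> ` carrier G = carrier H"
    using assms(3) by (simp add: iso_def bij_betw_def)
  then have "\<phi> ` derived G (carrier G) = derived H (carrier H)"
    using derived_img[of "carrier G"] by simp
  moreover have "derived G (carrier G) \<subseteq> carrier G"
    using G.derived_in_carrier by blast
  ultimately show ?thesis
    using assms(3) hom_mult
    by (auto simp: iso_def hom_def bij_betw_def subset_iff intro: inj_on_subset)
qed

lemma is_iso_derived_group:
  assumes "group G" "group H" "G \<cong> H"
  shows "derived_group G \<cong> derived_group H"
  using assms iso_derived_group unfolding is_iso_def by blast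

lemma D_realisable_derived_group:
  assumes "group H" "finite (carrier H)"
  shows "D_realisable (derived_group H)"
proof -
  obtain f :: "'a \<Rightarrow> nat" where f: "inj_on f (carrier H)"
    using finite_imp_inj_to_nat_seg[OF assms(2)] by blast
  let ?K = "image_group f H"
  have "group ?K"
    using group.inj_imp_image_group_is_group[OF assms(1) f] .
  moreover have "finite (carrier ?K)"
    using assms(2) by (simp add: image_group_carrier)
  moreover have "?K \<cong> H"
    using group.iso_sym[OF assms(1) is_isoI[OF inj_imp_image_group_iso[OF f]]] .
  ultimately show ?thesis
    unfolding D_realisable_def using is_iso_derived_group assms(1) by blast
qed

lemma (in group) conj_self_or_inv_mult_iff:
  assumes x: "x \<in> carrier G" and conj: "\<And>g. g \<in> carrier G \<Longrightarrow> g \<otimes> x \<otimes> inv g \<in> {x, inv x}"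
    and a: "a \<in> carrier G" and b: "b \<in> carrier G"
  shows "a \<otimes> b \<otimes> x \<otimes> inv (a \<otimes> b) = x \<longleftrightarrow> (a \<otimes> x \<otimes> inv a = x \<longleftrightarrow> b \<otimes> x \<otimes> inv b = x)"
proof -
  have split: "a \<otimes> b \<otimes> x \<otimes> inv (a \<otimes> b) = a \<otimes> (b \<otimes> x \<otimes> inv b) \<otimes> inv a"
    using a b x by (simp add: inv_mult_group m_assoc)
  have conj_inv: "a \<otimes> inv x \<otimes> inv a = inv (a \<otimes> x \<otimes> inv a)"
    using a x by (simp add: inv_mult_group m_assoc)
  show ?thesis
  proof (cases "b \<otimes> x \<otimes> inv b = x")
    case True
    then show ?thesis using split by simp
  next
    case False
    then have "b \<otimes> x \<otimes> inv b = inv x" and "inv x \<noteq> x"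
      using conj[OF b] by auto
    then show ?thesis using split conj_inv conj[OF a] x by auto
  qed
qed

lemma (in group) derived_commutes_if_conj_self_or_inv:
  assumes x: "x \<in> carrier G" and conj: "\<And>g. g \<in> carrier G \<Longrightarrow> g \<otimes> x \<otimes> inv g \<in> {x, inv x}"
    and y: "y \<in> derived G (carrier G)"
  shows "y \<otimes> x = x \<otimes> y"
proof -
  define fixes_x where "fixes_x g \<longleftrightarrow> g \<otimes> x \<otimes> inv g = x" for g
  let ?Z = "stabilizer G (\<lambda>g. \<lambda>h \<in> carrier G. g \<otimes> h \<otimes> inv g) x"
  have Z: "?Z = {g \<in> carrier G. fixes_x g}"
    using x by (simp add: stabilizer_def fixes_x_def)
  have mult: "fixes_x (g \<otimes> h) \<longleftrightarrow> (fixes_x g \<longleftrightarrow> fixes_x h)"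
    if "g \<in> carrier G" "h \<in> carrier G" for g h
    unfolding fixes_x_def using conj_self_or_inv_mult_iff[OF x conj that] .
  have "fixes_x \<one>"
    using x by (simp add: fixes_x_def)
  then have inv: "fixes_x (inv g) \<longleftrightarrow> fixes_x g" if "g \<in> carrier G" for g
    using mult[of g "inv g"] that by simp
  have "derived_set G (carrier G) \<subseteq> ?Z"
  proof
    fix c assume "c \<in> derived_set G (carrier G)"
    then obtain a b where "a \<in> carrier G" "b \<in> carrier G" and c: "c = a \<otimes> b \<otimes> inv a \<otimes> inv b"
      by blast
    then have "fixes_x c \<longleftrightarrow> (((fixes_x a \<longleftrightarrow> fixes_x b) \<longleftrightarrow> fixes_x a) \<longleftrightarrow> fixes_x b)"
      by (simp add: mult inv)
    then show "c \<in> ?Z"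
      using Z \<open>a \<in> carrier G\<close> \<open>b \<in> carrier G\<close> c by auto
  qed
  then have "derived G (carrier G) \<subseteq> ?Z"
    unfolding derived_def using group_action.stabilizer_subgroup[OF action_by_conjugation x]
    by (rule generate_subgroup_incl)
  then have "y \<otimes> x \<otimes> inv y = x"
    using y Z fixes_x_def by blast
  moreover have "y \<in> carrier G"
    using y derived_in_carrier by blast
  ultimately show ?thesis
    using x by (metis inv_solve_right' m_closed)
qed

definition cube_roots :: "('a, 'b) monoid_scheme \<Rightarrow> 'a set" where
  "cube_roots G = {y \<in> carrier G. y \<otimes>\<^bsub>G\<^esub> y \<otimes>\<^bsub>G\<^esub> y = \<one>\<^bsub>G\<^esub>}"

definition noncentral_cube_roots :: "('a, 'b) monoid_scheme \<Rightarrow> bool" where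
  "noncentral_cube_roots G \<longleftrightarrow>
     (\<exists>m \<in> carrier G. m \<noteq> \<one>\<^bsub>G\<^esub> \<and> cube_roots G = {\<one>\<^bsub>G\<^esub>, m, m \<otimes>\<^bsub>G\<^esub> m} \<and>
        (\<exists>t \<in> carrier G. m \<otimes>\<^bsub>G\<^esub> t \<noteq> t \<otimes>\<^bsub>G\<^esub> m))"

lemma image_cube_roots_iso:
  assumes "group G" "group H" "\<phi> \<in> iso G H"
  shows "\<phi> ` cube_roots G = cube_roots H"
proof -
  interpret group_hom G H \<phi>
    using assms by (simp add: group_hom_def group_hom_axioms_def iso_def)
  have inj: "inj_on \<phi> (carrier G)" and onto: "\<phi> ` carrier G = carrier H"
    using assms(3) by (auto simp: iso_def bij_betw_def)
  have eq_one: "\<phi> x = \<one>\<^bsub>H\<^esub> \<longleftrightarrow> x = \<one>\<^bsub>G\<^esub>" if "x \<in> carrier G" for x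
    using inj that by (metis G.one_closed hom_one inj_on_eq_iff)
  have "\<phi> x \<otimes>\<^bsub>H\<^esub> \<phi> x \<otimes>\<^bsub>H\<^esub> \<phi> x = \<one>\<^bsub>H\<^esub> \<longleftrightarrow> x \<otimes>\<^bsub>G\<^esub> x \<otimes>\<^bsub>G\<^esub> x = \<one>\<^bsub>G\<^esub>"
    if "x \<in> carrier G" for x
    using eq_one[of "x \<otimes>\<^bsub>G\<^esub> x \<otimes>\<^bsub>G\<^esub> x"] that by simp
  then show ?thesis
    unfolding cube_roots_def onto[symmetric] by auto
qed

lemma noncentral_cube_roots_iso:
  assumes "group G" "group H" "\<phi> \<in> iso G H" "noncentral_cube_roots G"
  shows "noncentral_cube_roots H"
proof -
  interpret group_hom G H \<phi>
    using assms by (simp add: group_hom_def group_hom_axioms_def iso_def)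
  have inj: "inj_on \<phi> (carrier G)"
    using assms(3) by (simp add: iso_def bij_betw_def)
  obtain m t where m: "m \<in> carrier G" "m \<noteq> \<one>\<^bsub>G\<^esub>"
    and cubes: "cube_roots G = {\<one>\<^bsub>G\<^esub>, m, m \<otimes>\<^bsub>G\<^esub> m}"
    and t: "t \<in> carrier G" "m \<otimes>\<^bsub>G\<^esub> t \<noteq> t \<otimes>\<^bsub>G\<^esub> m"
    using assms(4) unfolding noncentral_cube_roots_def by blast
  have "cube_roots H = {\<one>\<^bsub>H\<^esub>, \<phi> m, \<phi> m \<otimes>\<^bsub>H\<^esub> \<phi> m}"
    using image_cube_roots_iso[OF assms(1-3)] cubes m by simp
  moreover have "\<phi> m \<noteq> \<one>\<^bsub>H\<^esub>"
    using m inj by (metis G.one_closed hom_one inj_on_eq_iff)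
  moreover have "\<phi> m \<otimes>\<^bsub>H\<^esub> \<phi> t \<noteq> \<phi> t \<otimes>\<^bsub>H\<^esub> \<phi> m"
    using m t inj by (metis G.m_closed hom_mult inj_on_eq_iff)
  moreover have "\<phi> m \<in> carrier H" "\<phi> t \<in> carrier H"
    using m t by simp_all
  ultimately show ?thesis
    unfolding noncentral_cube_roots_def by blast
qed

lemma (in group) not_noncentral_cube_roots_derived_group:
  "\<not> noncentral_cube_roots (derived_group G)"
proof
  let ?D = "derived G (carrier G)"
  assume "noncentral_cube_roots (derived_group G)"
  then obtain m t where m: "m \<in> ?D" "m \<noteq> \<one>"
    and cubes: "{y \<in> ?D. y \<otimes> y \<otimes> y = \<one>} = {\<one>, m, m \<otimes> m}"
    and t: "t \<in> ?D" "m \<otimes> t \<noteq> t \<otimes> m"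
    unfolding noncentral_cube_roots_def cube_roots_def by auto
  have mG: "m \<in> carrier G"
    using m(1) derived_in_carrier[OF subset_refl] by blast
  have "m \<in> {y \<in> ?D. y \<otimes> y \<otimes> y = \<one>}"
    unfolding cubes by simp
  then have "inv m = m \<otimes> m"
    using mG by (intro inv_equality) auto
  have "g \<otimes> m \<otimes> inv g \<in> {m, inv m}" if g: "g \<in> carrier G" for g
  proof -
    let ?c = "g \<otimes> m \<otimes> inv g"
    have "inv g \<otimes> (g \<otimes> z) = z" if "z \<in> carrier G" for z
      using g that by (simp add: m_assoc[symmetric])
    then have "?c \<otimes> ?c \<otimes> ?c = g \<otimes> (m \<otimes> m \<otimes> m) \<otimes> inv g"
      using g mG by (simp add: m_assoc)
    also have "\<dots> = \<one>"
      using \<open>m \<in> {y \<in> ?D. y \<otimes> y \<otimes> y = \<one>}\<close> g by simp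
    finally have "?c \<in> {y \<in> ?D. y \<otimes> y \<otimes> y = \<one>}"
      using normal.inv_op_closed2[OF derived_self_is_normal g m(1)] by simp
    moreover have "?c \<noteq> \<one>"
      using conjugation_is_inj[OF g mG one_closed] g m(2) by auto
    ultimately show ?thesis
      unfolding cubes using \<open>inv m = m \<otimes> m\<close> by auto
  qed
  then have "t \<otimes> m = m \<otimes> t"
    by (rule derived_commutes_if_conj_self_or_inv[OF mG _ t(1)])
  with t(2) show False by simp
qed

lemma not_completely_D_realisable_if_subgroup:
  assumes "group G" "subgroup G1 G" "noncentral_cube_roots (G\<lparr>carrier := G1\<rparr>)"
  shows "\<not> completely_D_realisable G"
proof
  assume "completely_D_realisable G"
  then obtain H :: "nat monoid" and H1 where "group H" "subgroup H1 H"
    and iso: "derived_group (H\<lparr>carrier := H1\<rparr>) \<cong> G\<lparr>carrier := G1\<rparr>"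
    using assms(2) unfolding completely_D_realisable_def by blast
  then interpret K: group "H\<lparr>carrier := H1\<rparr>"
    by (simp add: group.subgroup_imp_group)
  obtain \<psi> where \<psi>: "\<psi> \<in> iso (G\<lparr>carrier := G1\<rparr>) (derived_group (H\<lparr>carrier := H1\<rparr>))"
    using group.iso_sym[OF K.derived_group_is_group iso] unfolding is_iso_def by blast
  have "group (G\<lparr>carrier := G1\<rparr>)"
    using group.subgroup_imp_group[OF assms(1,2)] .
  then have "noncentral_cube_roots (derived_group (H\<lparr>carrier := H1\<rparr>))"
    using noncentral_cube_roots_iso[OF _ K.derived_group_is_group \<psi> assms(3)] by blast
  with K.not_noncentral_cube_roots_derived_group show False ..
qed

text \<open>A copy of S_3 in A_5: the odd permutations of {1, 2, 3} are made even by the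
  transposition (4 5).\<close>

definition cyc123 :: "nat \<Rightarrow> nat" where "cyc123 = transpose 1 2 \<circ> transpose 2 3"
definition cyc132 :: "nat \<Rightarrow> nat" where "cyc132 = transpose 2 3 \<circ> transpose 1 2"
definition swap12_45 :: "nat \<Rightarrow> nat" where "swap12_45 = transpose 1 2 \<circ> transpose 4 5"
definition swap23_45 :: "nat \<Rightarrow> nat" where "swap23_45 = transpose 2 3 \<circ> transpose 4 5"
definition swap13_45 :: "nat \<Rightarrow> nat" where "swap13_45 = transpose 1 3 \<circ> transpose 4 5"

definition S3_even :: "(nat \<Rightarrow> nat) set" where
  "S3_even = {id, cyc123, cyc132, swap12_45, swap23_45, swap13_45}"

lemmas S3_even_defs = cyc123_def cyc132_def swap12_45_def swap23_45_def swap13_45_def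

lemma S3_even_mult_table:
  "cyc123 \<circ> cyc123 = cyc132"       "cyc123 \<circ> cyc132 = id"
  "cyc132 \<circ> cyc123 = id"           "cyc132 \<circ> cyc132 = cyc123"
  "cyc123 \<circ> swap12_45 = swap13_45" "cyc123 \<circ> swap23_45 = swap12_45" "cyc123 \<circ> swap13_45 = swap23_45"
  "cyc132 \<circ> swap12_45 = swap23_45" "cyc132 \<circ> swap23_45 = swap13_45" "cyc132 \<circ> swap13_45 = swap12_45"
  "swap12_45 \<circ> cyc123 = swap23_45" "swap23_45 \<circ> cyc123 = swap13_45" "swap13_45 \<circ> cyc123 = swap12_45"
  "swap12_45 \<circ> cyc132 = swap13_45" "swap23_45 \<circ> cyc132 = swap12_45" "swap13_45 \<circ> cyc132 = swap23_45"
  "swap12_45 \<circ> swap12_45 = id"     "swap12_45 \<circ> swap23_45 = cyc123" "swap12_45 \<circ> swap13_45 = cyc132"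
  "swap23_45 \<circ> swap12_45 = cyc132" "swap23_45 \<circ> swap23_45 = id"     "swap23_45 \<circ> swap13_45 = cyc123"
  "swap13_45 \<circ> swap12_45 = cyc123" "swap13_45 \<circ> swap23_45 = cyc132" "swap13_45 \<circ> swap13_45 = id"
  by (auto simp: S3_even_defs fun_eq_iff transpose_def)

lemma S3_even_distinct:
  "cyc123 \<noteq> id" "swap12_45 \<noteq> id" "swap23_45 \<noteq> id" "swap13_45 \<noteq> id" "swap13_45 \<noteq> swap23_45"
proof -
  have "cyc123 1 = 2" "swap12_45 4 = 5" "swap23_45 4 = 5" "swap13_45 4 = 5"
    "swap13_45 1 \<noteq> swap23_45 1"
    by (simp_all add: S3_even_defs transpose_def)
  then show "cyc123 \<noteq> id" "swap12_45 \<noteq> id" "swap23_45 \<noteq> id" "swap13_45 \<noteq> id"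
    "swap13_45 \<noteq> swap23_45"
    by auto
qed

lemma transpose_comp_transpose_in_alt_group:
  assumes "a \<in> {1..n}" "b \<in> {1..n}" "c \<in> {1..n}" "d \<in> {1..n}" "a \<noteq> b" "c \<noteq> d"
  shows "transpose a b \<circ> transpose c d \<in> carrier (alt_group n)"
  using assms
  by (simp add: alt_group_carrier permutes_compose permutes_swap_id evenperm_comp
      permutation_swap_id evenperm_swap)

lemma S3_even_subset:
  assumes "n \<ge> 5"
  shows "S3_even \<subseteq> carrier (alt_group n)"
proof -
  have "id \<in> carrier (alt_group n)"
    by (simp add: alt_group_carrier permutes_id evenperm_id)
  then show ?thesis
    unfolding S3_even_def S3_even_defs
    using assms by (auto intro!: transpose_comp_transpose_in_alt_group)
qed

lemma S3_even_mult_closed: "x \<in> S3_even \<Longrightarrow> y \<in> S3_even \<Longrightarrow> x \<circ> y \<in> S3_even"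
  unfolding S3_even_def by (elim insertE emptyE) (simp_all add: S3_even_mult_table)

lemma S3_even_subgroup:
  assumes "n \<ge> 5"
  shows "subgroup S3_even (alt_group n)"
proof -
  interpret A: group "alt_group n"
    by (rule alt_group_is_group)
  have sub: "S3_even \<subseteq> carrier (alt_group n)"
    by (rule S3_even_subset[OF assms])
  have inv: "inv\<^bsub>alt_group n\<^esub> a \<in> S3_even" if a: "a \<in> S3_even" for a
  proof -
    have "\<exists>b \<in> S3_even. b \<circ> a = id"
      using a unfolding S3_even_def by (elim insertE emptyE) (simp_all add: S3_even_mult_table)
    then obtain b where "b \<in> S3_even" "b \<circ> a = id" ..
    moreover from this have "inv\<^bsub>alt_group n\<^esub> a = b"
      using A.inv_equality[of b a] a sub by (auto simp: alt_group_mult alt_group_one)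
    ultimately show ?thesis by simp
  qed
  show ?thesis
  proof (rule A.subgroupI[OF sub _ inv])
    show "S3_even \<noteq> {}"
      by (simp add: S3_even_def)
    show "a \<otimes>\<^bsub>alt_group n\<^esub> b \<in> S3_even" if "a \<in> S3_even" "b \<in> S3_even" for a b
      using S3_even_mult_closed[OF that] by (simp add: alt_group_mult)
  qed
qed

lemma noncentral_cube_roots_S3_even:
  "noncentral_cube_roots ((alt_group n)\<lparr>carrier := S3_even\<rparr>)"
proof -
  have "{y \<in> S3_even. y \<circ> y \<circ> y = id} = {id, cyc123, cyc123 \<circ> cyc123}"
    unfolding S3_even_def by (auto simp: S3_even_mult_table S3_even_distinct)
  moreover have "cyc123 \<circ> swap12_45 \<noteq> swap12_45 \<circ> cyc123"
    by (simp add: S3_even_mult_table S3_even_distinct)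
  ultimately show ?thesis
    unfolding noncentral_cube_roots_def cube_roots_def
    by (auto simp: alt_group_mult alt_group_one S3_even_def S3_even_distinct)
qed

theorem theorem3p2:
  fixes n :: nat
  assumes "n \<ge> 5"
  shows "D_realisable (alt_group n) \<and> \<not> completely_D_realisable (alt_group n)"
proof
  have "derived_group (alt_group n) = alt_group n"
    using derived_alt_group_const[OF assms] by (simp add: derived_group_def)
  moreover have "finite (carrier (alt_group n))"
    by (rule finite_subset[OF _ finite_permutations[OF finite_atLeastAtMost[of 1 n]]])
      (auto simp: alt_group_carrier)
  ultimately show "D_realisable (alt_group n)"
    using D_realisable_derived_group[OF alt_group_is_group] by metis
  show "\<not> completely_D_realisable (alt_group n)"
    by (rule not_completely_D_realisable_if_subgroup[OF alt_group_is_group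
          S3_even_subgroup[OF assms] noncentral_cube_roots_S3_even])
qed

end
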